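(* Let $Y$ be a generic Enriques surface. For effective $\beta\in H_2(Y,\mathbb{Z})$ (modulo torsion) with $2\nmid\beta$ and $\beta^2=2d$, let $M_d$ be one of the two connected components of the moduli space of stable $1$-dimensional sheaves $F$ on $Y$ with support class $\beta$ and $\chi(F)=1$ (smooth projective of dimension $2d+1$), with Hilbert–Chow morphism $\rho:M_d\to\mathbb{P}$, perverse Hodge numbers ${}^ph^{i,j}(M_d)=\dim H^j(\mathbb{P},{}^p\mathcal{H}^i(R\rho_*\mathbb{Q}[\dim M_d]))$ and Betti numbers $b_{i,d}=b_i(M_d)$. Let \[ F(u,p,q)=\frac{(1-u^{-1}p)(1-up)}{(-p)}\prod_{m\ge1}\frac{1}{(1-q^m)^8}\prod_{\substack{m\ge1\\ m\text{ odd}}}\frac{1}{(1-u^{-2}q^m)(1-u^2q^m)(1-upq^m)(1-up^{-1}q^m)(1-u^{-1}pq^m)(1-u^{-1}p^{-1}q^m)(1-q^m)^2}. \] Assume that the ${}^ph^{i,j}(M_d)$ depend only on $d$ and that \[ \sum_{d\ge0}\sum_{i,j}{}^ph^{i,j}(M_d)(-1)^{i+j}p^iu^jq^d=F(u,p,q)-\Big(\sum_{d\ge0}u^{-(2d+1)}\sum_{i=0}^{4d+2}(-u)^ib_{i,d}\Big)\prod_{m\ge1}\frac{(1-u^2q^{2m})(1-u^{-2}q^{2m})(1-q^{2m})^2}{(1-upq^{2m})(1-u^{-1}p^{-1}q^{2m})(1-u^{-1}pq^{2m})(1-up^{-1}q^{2m})}. \] Then for all $d\ge0$ and integers $i,j$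 with $i,j<-d/2-1$, \[ {}^ph^{i,j}(M_d)(-1)^{i+j}=\mathrm{Coeff}_{p^iu^jq^d}\big[F(u,p,q)\big]. \]
   Context: $F$ equals, in the paper's notation, $\frac{(1-u^{-1}p)(1-up)}{(-p)}\frac{\Theta(u^2,q^2)}{\Theta(u^2,q)}\frac{\eta(q^2)^8}{\eta(q)^{16}}\frac{\Theta(pu,q^2)\Theta(pu^{-1},q^2)}{\Theta(pu,q)\Theta(pu^{-1},q)}$ with $\Theta(p,q)=(p^{1/2}-p^{-1/2})\prod_{m\ge1}\frac{(1-pq^m)(1-p^{-1}q^m)}{(1-q^m)^2}$ and $\eta(q)=q^{1/24}\prod_{m\ge1}(1-q^m)$. ${}^p\mathcal{H}^i$ is perverse cohomology for the middle perversity. *)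

theory Defs
  imports "HOL-Analysis.Infinite_Products" "HOL-Computational_Algebra.Formal_Laurent_Series"
begin

text \<open>Coefficient ring: Laurent series in p (outer) over Laurent series in u (inner) over Q.
  Generating series in q are formal power series over this ring; infinite products are
  the library's prodinf in the (subdegree) metric topology of fps.\<close>

type_synonym R = "rat fls fls"

definition uu :: R where "uu = fls_const fls_X"
definition pp :: R where "pp = fls_X"

definition one_minus :: "R \<Rightarrow> nat \<Rightarrow> R fps" where
  "one_minus c m = 1 - fps_const c * fps_X ^ m"

definition coeff_puq :: "R fps \<Rightarrow> int \<Rightarrow> int \<Rightarrow> nat \<Rightarrow> rat" where
  "coeff_puq G i j d = fls_nth (fls_nth (fps_nth G d) i) j"

definition F_series :: "R fps" where
  "F_series =
     fps_const ((1 - inverse uu * pp) * (1 - uu * pp) / (- pp))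
     * prodinf (\<lambda>k. inverse (one_minus 1 (k+1) ^ 8))
     * prodinf (\<lambda>k. let m = 2*k+1 in inverse
          (one_minus (inverse (uu^2)) m * one_minus (uu^2) m
           * one_minus (uu*pp) m * one_minus (uu * inverse pp) m
           * one_minus (inverse uu * pp) m * one_minus (inverse uu * inverse pp) m
           * one_minus 1 m ^ 2))"

definition G_series :: "R fps" where
  "G_series =
     prodinf (\<lambda>k. let m = 2*(k+1) in
        (one_minus (uu^2) m * one_minus (inverse (uu^2)) m * one_minus 1 m ^ 2)
        * inverse (one_minus (uu*pp) m * one_minus (inverse uu * inverse pp) m
                   * one_minus (inverse uu * pp) m * one_minus (uu * inverse pp) m))"

text \<open>sum_{d>=0} u^{-(2d+1)} sum_{i=0}^{4d+2} (-u)^i b_{i,d} q^d, with b d i = b_i(M_d).\<close>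
definition betti_series :: "(nat \<Rightarrow> nat \<Rightarrow> nat) \<Rightarrow> R fps" where
  "betti_series b = Abs_fps (\<lambda>d. inverse (uu ^ (2*d+1)) *
      (\<Sum>i=0..4*d+2. (- uu) ^ i * of_nat (b d i)))"

end

theory Submission
  imports Defs
begin

unbundle no vec_syntax
unbundle Formal_Power_Series.fps_syntax
unbundle Formal_Laurent_Series.fps_syntax

(* Give the monomial p^i u^j q^n the weight 2i + n. The correction term betti_series b * G_series
   only involves monomials of nonnegative weight: u is weightless, and p^-1 occurs only together
   with q^m for m >= 2. Series with this property are closed under products, under inverses of
   series with constant term 1, and under infinite products of factors 1 + O(q^(k+1)). Hence the
   correction term has no p^i q^d coefficient when 2i + d < 0, and there the hypothesis already
   is the claim. *)

definition nonneg_weight_coeff :: "nat \<Rightarrow> 'a::zero fls \<Rightarrow> bool" where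
  "nonneg_weight_coeff n x \<longleftrightarrow> (\<forall>i. 2 * i + int n < 0 \<longrightarrow> x $$ i = 0)"

definition nonneg_weight :: "'a::zero fls fps \<Rightarrow> bool" where
  "nonneg_weight H \<longleftrightarrow> (\<forall>n. nonneg_weight_coeff n (H $ n))"

lemma nonneg_weight_coeff_subdegree:
  "nonneg_weight_coeff n x \<Longrightarrow> x \<noteq> 0 \<Longrightarrow> 2 * fls_subdegree x + int n \<ge> 0"
  unfolding nonneg_weight_coeff_def by (metis linorder_not_le nth_fls_subdegree_nonzero)

lemma nonneg_weight_coeff_mult:
  fixes x y :: "'a::{comm_monoid_add,mult_zero} fls"
  assumes "nonneg_weight_coeff a x" "nonneg_weight_coeff b y" "a + b \<le> n"
  shows "nonneg_weight_coeff n (x * y)"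
proof (cases "x = 0 \<or> y = 0")
  case True
  then show ?thesis by (auto simp: nonneg_weight_coeff_def)
next
  case False
  then have "2 * (fls_subdegree x + fls_subdegree y) + int n \<ge> 0"
    using assms by (auto dest!: nonneg_weight_coeff_subdegree)
  then show ?thesis
    unfolding nonneg_weight_coeff_def by (auto intro!: fls_times_nth_eq0)
qed

lemma nonneg_weight_coeff_zero [simp]: "nonneg_weight_coeff n 0"
  unfolding nonneg_weight_coeff_def by simp

lemma nonneg_weight_coeff_add:
  "nonneg_weight_coeff n x \<Longrightarrow> nonneg_weight_coeff n y \<Longrightarrow> nonneg_weight_coeff n (x + y)"
  unfolding nonneg_weight_coeff_def by auto

lemma nonneg_weight_coeff_diff:
  fixes x y :: "'a::group_add fls"
  shows "nonneg_weight_coeff n x \<Longrightarrow> nonneg_weight_coeff n y \<Longrightarrow> nonneg_weight_coeff n (x - y)"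
  unfolding nonneg_weight_coeff_def by auto

lemma nonneg_weight_coeff_uminus:
  fixes x :: "'a::group_add fls"
  shows "nonneg_weight_coeff n x \<Longrightarrow> nonneg_weight_coeff n (- x)"
  unfolding nonneg_weight_coeff_def by auto

lemma nonneg_weight_coeff_sum:
  "(\<And>k. k \<in> A \<Longrightarrow> nonneg_weight_coeff n (f k)) \<Longrightarrow> nonneg_weight_coeff n (sum f A)"
  by (induction A rule: infinite_finite_induct) (auto simp: nonneg_weight_coeff_add)

lemma nonneg_weight_coeff_const: "nonneg_weight_coeff n (fls_const c)"
  unfolding nonneg_weight_coeff_def by auto

lemma nonneg_weight_coeff_one: "nonneg_weight_coeff n (1 :: 'a::{zero,one} fls)"
  using nonneg_weight_coeff_const[of n 1] by simp

lemma nonneg_weight_coeff_power: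
  fixes x :: "'a::comm_semiring_1 fls"
  shows "nonneg_weight_coeff 0 x \<Longrightarrow> nonneg_weight_coeff n (x ^ k)"
  by (induction k) (auto simp: nonneg_weight_coeff_one intro: nonneg_weight_coeff_mult)

lemma nonneg_weight_mult:
  fixes A B :: "'a::comm_ring_1 fls fps"
  assumes "nonneg_weight A" "nonneg_weight B"
  shows "nonneg_weight (A * B)"
  unfolding nonneg_weight_def fps_mult_nth
proof (intro allI nonneg_weight_coeff_sum)
  fix n :: nat and i assume "i \<in> {0..n}"
  then show "nonneg_weight_coeff n (A $ i * B $ (n - i))"
    using assms unfolding nonneg_weight_def by (intro nonneg_weight_coeff_mult) auto
qed

lemma nonneg_weight_one: "nonneg_weight (1 :: 'a::comm_ring_1 fls fps)"
  unfolding nonneg_weight_def by (simp add: nonneg_weight_coeff_one)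

lemma nonneg_weight_power:
  fixes A :: "'a::comm_ring_1 fls fps"
  shows "nonneg_weight A \<Longrightarrow> nonneg_weight (A ^ k)"
  by (induction k) (auto simp: nonneg_weight_one nonneg_weight_mult)

lemma nonneg_weight_prod:
  fixes f :: "'b \<Rightarrow> 'a::comm_ring_1 fls fps"
  shows "(\<And>k. k \<in> K \<Longrightarrow> nonneg_weight (f k)) \<Longrightarrow> nonneg_weight (prod f K)"
  by (induction K rule: infinite_finite_induct) (auto simp: nonneg_weight_one nonneg_weight_mult)

lemma fps_inverse_nth_rec:
  fixes f :: "'a::field fps"
  assumes "f $ 0 = 1" "n > 0"
  shows "inverse f $ n = - (\<Sum>i<n. inverse f $ i * f $ (n - i))"
proof -
  have "(inverse f * f) $ n = 0"
    using assms by (simp add: inverse_mult_eq_1)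
  then have "inverse f $ n * f $ 0 + (\<Sum>i<n. inverse f $ i * f $ (n - i)) = 0"
    by (simp add: fps_mult_nth atLeast0AtMost lessThan_Suc_atMost[symmetric] add.commute)
  then show ?thesis
    using assms(1) by (simp add: eq_neg_iff_add_eq_0)
qed

lemma nonneg_weight_inverse:
  fixes A :: "'a::field fls fps"
  assumes "nonneg_weight A" "A $ 0 = 1"
  shows "nonneg_weight (inverse A)"
  unfolding nonneg_weight_def
proof
  fix n show "nonneg_weight_coeff n (inverse A $ n)"
  proof (induction n rule: less_induct)
    case (less n)
    show ?case
    proof (cases "n = 0")
      case True
      then show ?thesis
        using assms(2) by (simp add: nonneg_weight_coeff_one)
    next
      case False
      have "nonneg_weight_coeff n (inverse A $ i * A $ (n - i))" if "i < n" for i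
        using assms(1) that unfolding nonneg_weight_def
        by (intro nonneg_weight_coeff_mult[OF less[OF that]]) auto
      then show ?thesis
        using False fps_inverse_nth_rec[OF assms(2)]
        by (auto intro!: nonneg_weight_coeff_uminus nonneg_weight_coeff_sum)
    qed
  qed
qed

lemma fps_cutoff_eq_1D:
  fixes f :: "'a::zero_neq_one fps"
  assumes "fps_cutoff m f = 1"
  shows "0 < m" and "f $ 0 = 1"
proof -
  show "0 < m"
    using arg_cong[OF assms, of "\<lambda>g. g $ 0"] by (cases m) auto
  then show "f $ 0 = 1"
    using arg_cong[OF assms, of "\<lambda>g. g $ 0"] by simp
qed

lemma fps_cutoff_mult_eq_1:
  fixes f g :: "'a::comm_ring_1 fps"
  assumes "fps_cutoff m f = 1" "fps_cutoff m g = 1"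
  shows "fps_cutoff m (f * g) = 1"
proof -
  have "m \<noteq> 0" using fps_cutoff_eq_1D(1)[OF assms(1)] by simp
  have "fps_cutoff m (f * g) = fps_cutoff m (fps_cutoff m f * fps_cutoff m g)"
    by (simp add: fps_cutoff_eq_fps_cutoff_iff fps_cutoff_left_mult_nth fps_cutoff_right_mult_nth)
  also have "\<dots> = 1"
    using assms \<open>m \<noteq> 0\<close> by (simp add: fps_cutoff_one)
  finally show ?thesis .
qed

lemma fps_cutoff_power_eq_1:
  fixes f :: "'a::comm_ring_1 fps"
  assumes "fps_cutoff m f = 1"
  shows "fps_cutoff m (f ^ k) = 1"
proof (induction k)
  case 0
  have "m \<noteq> 0" using fps_cutoff_eq_1D(1)[OF assms] by simp
  then show ?case by (simp add: fps_cutoff_one)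
next
  case (Suc k)
  then show ?case using assms by (simp add: fps_cutoff_mult_eq_1)
qed

lemma fps_cutoff_inverse_eq_1:
  fixes f :: "'a::field fps"
  assumes "fps_cutoff m f = 1"
  shows "fps_cutoff m (inverse f) = 1"
proof -
  have "m \<noteq> 0" "f $ 0 = 1" using fps_cutoff_eq_1D[OF assms] by simp_all
  then have "fps_cutoff m (inverse f) = fps_cutoff m (inverse (fps_cutoff m f))"
    by (simp add: fps_cutoff_inverse)
  also have "\<dots> = 1"
    using assms \<open>m \<noteq> 0\<close> by (simp add: fps_cutoff_one)
  finally show ?thesis .
qed

lemma prodinf_fps_nth:
  fixes f :: "nat \<Rightarrow> 'a::idom fps"
  assumes "\<And>k. fps_cutoff (Suc k) (f k) = 1"
  shows "prodinf f $ n = (\<Prod>k\<le>n. f k) $ n"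
proof -
  define P where "P N = (\<Prod>k\<le>N. f k)" for N
  have stable: "P N $ n = P n $ n" if "n \<le> N" for n N
    using that
  proof (induction N rule: dec_induct)
    case (step N)
    then have "P (Suc N) $ n = (P N * fps_cutoff (Suc (Suc N)) (f (Suc N))) $ n"
      by (simp add: P_def fps_cutoff_right_mult_nth)
    with step show ?case
      by (simp add: assms)
  qed simp
  define L where "L = Abs_fps (\<lambda>n. P n $ n)"
  have "P \<longlonglongrightarrow> L"
    by (rule tendsto_fpsI) (auto simp: L_def eventually_sequentially intro: stable)
  moreover have "L $ 0 = 1"
    using fps_cutoff_eq_1D(2)[OF assms[of 0]] by (simp add: L_def P_def)
  ultimately have "f has_prod L"
    unfolding has_prod_def raw_has_prod_def P_def by auto
  then have "prodinf f = L"
    using has_prod_unique by metis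
  then show ?thesis
    by (simp add: L_def P_def)
qed

lemma nonneg_weight_prodinf:
  fixes f :: "nat \<Rightarrow> 'a::idom fls fps"
  assumes "\<And>k. nonneg_weight (f k)" "\<And>k. fps_cutoff (Suc k) (f k) = 1"
  shows "nonneg_weight (prodinf f)"
  using nonneg_weight_prod[of "{.._}" f] assms(1)
  unfolding nonneg_weight_def prodinf_fps_nth[OF assms(2)] by blast

lemma nonneg_weight_coeff_uu: "nonneg_weight_coeff 0 uu"
  unfolding uu_def by (rule nonneg_weight_coeff_const)

lemma nonneg_weight_coeff_inverse_uu: "nonneg_weight_coeff 0 (inverse uu)"
  unfolding uu_def by (simp add: fls_inverse_const nonneg_weight_coeff_const)

lemma nonneg_weight_coeff_pp: "nonneg_weight_coeff 0 pp"
  unfolding pp_def nonneg_weight_coeff_def by auto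

lemma nonneg_weight_coeff_inverse_pp: "nonneg_weight_coeff 2 (inverse pp)"
  unfolding pp_def nonneg_weight_coeff_def by (auto simp: fls_inverse_X)

lemma nonneg_weight_one_minus: "nonneg_weight_coeff m c \<Longrightarrow> nonneg_weight (one_minus c m)"
  unfolding nonneg_weight_def one_minus_def
  by (auto simp: fps_X_power_nth nonneg_weight_coeff_one
           intro!: nonneg_weight_coeff_diff nonneg_weight_coeff_uminus)

lemma fps_cutoff_one_minus: "0 < n \<Longrightarrow> n \<le> m \<Longrightarrow> fps_cutoff n (one_minus c m) = 1"
  unfolding one_minus_def by (auto simp: fps_eq_iff fps_X_power_nth)

lemma nonneg_weight_G_series: "nonneg_weight G_series"
proof -
  have weights:
    "nonneg_weight_coeff (2 * (k + 1)) (uu^2)"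
    "nonneg_weight_coeff (2 * (k + 1)) (inverse (uu^2))"
    "nonneg_weight_coeff (2 * (k + 1)) 1"
    "nonneg_weight_coeff (2 * (k + 1)) (uu * pp)"
    "nonneg_weight_coeff (2 * (k + 1)) (uu * inverse pp)"
    "nonneg_weight_coeff (2 * (k + 1)) (inverse uu * pp)"
    "nonneg_weight_coeff (2 * (k + 1)) (inverse uu * inverse pp)" for k
    unfolding power_inverse[symmetric]
    by (auto intro: nonneg_weight_coeff_one nonneg_weight_coeff_power nonneg_weight_coeff_mult
          nonneg_weight_coeff_uu nonneg_weight_coeff_inverse_uu
          nonneg_weight_coeff_pp nonneg_weight_coeff_inverse_pp)
  show ?thesis
    unfolding G_series_def Let_def
    by (intro nonneg_weight_prodinf nonneg_weight_mult nonneg_weight_power nonneg_weight_inverse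
          nonneg_weight_one_minus weights fps_cutoff_mult_eq_1 fps_cutoff_power_eq_1
          fps_cutoff_inverse_eq_1 fps_cutoff_one_minus)
       (simp_all add: one_minus_def)
qed

lemma nonneg_weight_betti_series: "nonneg_weight (betti_series b)"
  unfolding nonneg_weight_def betti_series_def fps_nth_Abs_fps power_inverse[symmetric]
  by (intro allI nonneg_weight_coeff_mult[of 0 _ 0] nonneg_weight_coeff_sum nonneg_weight_coeff_power
        nonneg_weight_coeff_inverse_uu nonneg_weight_coeff_uminus nonneg_weight_coeff_uu)
     (simp_all add: fls_of_nat nonneg_weight_coeff_const)

theorem lemma3p8:
  fixes ph :: "nat \<Rightarrow> int \<Rightarrow> int \<Rightarrow> nat"
    and b :: "nat \<Rightarrow> nat \<Rightarrow> nat"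
  assumes gen: "\<And>d i j. of_nat (ph d i j) * (-1) powi (i + j)
                  = coeff_puq (F_series - betti_series b * G_series) i j d"
  shows "\<And>d i j. of_int i < - of_nat d / 2 - (1::rat) \<Longrightarrow> of_int j < - of_nat d / 2 - (1::rat) \<Longrightarrow>
           of_nat (ph d i j) * (-1) powi (i + j) = coeff_puq F_series i j d"
proof -
  fix d i j
  assume "of_int i < - of_nat d / 2 - (1::rat)"
  then have "2 * i + int d < 0"
    by linarith
  moreover have "nonneg_weight (betti_series b * G_series)"
    by (intro nonneg_weight_mult nonneg_weight_betti_series nonneg_weight_G_series)
  ultimately have "(betti_series b * G_series) $ d $$ i = 0"
    unfolding nonneg_weight_def nonneg_weight_coeff_def by blast
  then show "of_nat (ph d i j) * (-1) powi (i + j) = coeff_puq F_series i j d"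
    using gen[of d i j] by (simp add: coeff_puq_def)
qed

end
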